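(* For every $n\ge1$, the star graph $G=K_{1,n-1}$ on $n$ vertices satisfies $$a_0(G)<a_1(G)<\cdots<a_{\lfloor\frac{n-1}{2}\rfloor}(G);$$ in particular its $a$-sequence satisfies the tail-peaked condition.
   Context: All graphs are finite simple graphs; $G|_I$ is the induced subgraph on $I\subseteq V(G)$. The signed $a$-number: $sa(\emptyset)=1$; if $G$ has connected components $G_1,\dots,G_\ell$, $sa(G)=\prod_k sa(G_k)$; if $G$ is connected and nonempty, $sa(G)=-\sum_{I\subsetneq V(G)}sa(G|_I)$ when $|V(G)|$ is even and $0$ when odd. $a(G)=|sa(G)|$, $a_i(G)=\sum_{I\subseteq V(G),|I|=2i}a(G|_I)$, and the $a$-sequence is $(a_0(G),a_1(G),\dots)$. A sequence satisfies the tail-peaked condition if it is eventually zero and is (weakly) increasing up to and including its second-to-last nonzero term. The star graph $K_{1,m}$ has one center vertex adjacent to each of $m$ leaves and no other edges. *)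

theory Defs
  imports Main
begin

text \<open>A finite simple graph is given by a finite vertex set V and an adjacency relation
  E (symmetric, irreflexive on V).  The induced subgraph on I has vertex set I and the
  edges of E between vertices of I; so a (vertex set, adjacency) pair (I, E) with I a
  finite subset of V represents the induced subgraph G|_I.\<close>

definition edges_on :: "('a \<Rightarrow> 'a \<Rightarrow> bool) \<Rightarrow> 'a set \<Rightarrow> ('a \<times> 'a) set" where
  "edges_on E I = {(u, v). u \<in> I \<and> v \<in> I \<and> (E u v \<or> E v u)}"

definition connected_on :: "('a \<Rightarrow> 'a \<Rightarrow> bool) \<Rightarrow> 'a set \<Rightarrow> bool" where
  "connected_on E I \<longleftrightarrow> I \<noteq> {} \<and> (\<forall>x\<in>I. \<forall>y\<in>I. (x, y) \<in> (edges_on E I)\<^sup>*)"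

definition components :: "('a \<Rightarrow> 'a \<Rightarrow> bool) \<Rightarrow> 'a set \<Rightarrow> 'a set set" where
  "components E I = {{y \<in> I. (x, y) \<in> (edges_on E I)\<^sup>*} | x. x \<in> I}"

lemma component_proper:
  assumes "I \<noteq> {}" "\<not> connected_on E I" "C \<in> components E I"
  shows "C \<subset> I"
proof -
  obtain z where z: "z \<in> I" "C = {y \<in> I. (z, y) \<in> (edges_on E I)\<^sup>*}"
    using assms(3) unfolding components_def by blast
  have sym: "sym ((edges_on E I)\<^sup>*)"
    by (rule sym_rtrancl) (auto simp: sym_def edges_on_def)
  show ?thesis
  proof (rule ccontr)
    assume "\<not> C \<subset> I"
    then have "C = I" using z by blast
    then have "\<forall>y\<in>I. (z, y) \<in> (edges_on E I)\<^sup>*" using z by blast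
    then have "\<forall>x\<in>I. \<forall>y\<in>I. (x, y) \<in> (edges_on E I)\<^sup>*"
      using sym by (meson rtrancl_trans symD)
    then show False using assms(1,2) unfolding connected_on_def by blast
  qed
qed

text \<open>The signed a-number sa(G|_I).  (Infinite vertex sets do not occur; the value 0
  there is a dummy.)\<close>
function sa :: "('a \<Rightarrow> 'a \<Rightarrow> bool) \<Rightarrow> 'a set \<Rightarrow> int" where
  "sa E I =
     (if infinite I then 0
      else if I = {} then 1
      else if connected_on E I then
        (if even (card I) then - (\<Sum>J\<in>{J. J \<subset> I}. sa E J) else 0)
      else (\<Prod>C\<in>components E I. sa E C))"
  by pat_completeness auto
termination
proof (relation "measure (\<lambda>(E, I). card I)")
  show "wf (measure (\<lambda>(E, I). card I))" by simp
next
  fix E :: "'a \<Rightarrow> 'a \<Rightarrow> bool" and I J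
  assume "\<not> infinite I" "J \<in> {J. J \<subset> I}"
  then show "((E, J), E, I) \<in> measure (\<lambda>(E, I). card I)"
    by (simp add: psubset_card_mono)
next
  fix E :: "'a \<Rightarrow> 'a \<Rightarrow> bool" and I C
  assume "\<not> infinite I" "I \<noteq> {}" "\<not> connected_on E I" "C \<in> components E I"
  then show "((E, C), E, I) \<in> measure (\<lambda>(E, I). card I)"
    using component_proper[of I E C] by (simp add: psubset_card_mono)
qed

declare sa.simps [simp del]

definition a_num :: "('a \<Rightarrow> 'a \<Rightarrow> bool) \<Rightarrow> 'a set \<Rightarrow> nat" where
  "a_num E I = nat \<bar>sa E I\<bar>"

definition a_seq :: "'a set \<Rightarrow> ('a \<Rightarrow> 'a \<Rightarrow> bool) \<Rightarrow> nat \<Rightarrow> nat" where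
  "a_seq V E i = (\<Sum>I\<in>{I. I \<subseteq> V \<and> card I = 2 * i}. a_num E I)"

text \<open>Tail-peaked: eventually zero, and weakly increasing up to and including the
  second-to-last nonzero term.\<close>
definition tail_peaked :: "(nat \<Rightarrow> nat) \<Rightarrow> bool" where
  "tail_peaked f \<longleftrightarrow> (\<exists>N. \<forall>m\<ge>N. f m = 0) \<and>
     (\<forall>i j p q. i \<le> j \<and> j \<le> p \<and> p < q \<and> f p \<noteq> 0 \<and> f q \<noteq> 0 \<longrightarrow> f i \<le> f j)"

definition star_vertices :: "nat \<Rightarrow> nat set" where
  "star_vertices n = {0..<n}"

definition star_adj :: "nat \<Rightarrow> nat \<Rightarrow> bool" where
  "star_adj u v \<longleftrightarrow> u \<noteq> v \<and> (u = 0 \<or> v = 0)"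

end

(*
  Write t_k for the Taylor coefficients of tan x.  For a vertex set I containing the centre,
  sa(G|_I) depends only on k = |I| - 1: the subsets avoiding the centre are edgeless and
  contribute nothing except sa({}) = 1, so the defining recursion becomes
  sum_j C(k,j) s_j = -1 for odd k (and s_k = 0 for even k).  Its exponential generating
  function is -tanh x, because cosh x * tanh x = sinh x; hence |s_k| = k! t_k and
  a_i = C(n-1, 2i-1) (2i-1)! t_(2i-1).  Comparing coefficients in tan' = 1 + tan^2 gives
  t_k <= 3 t_(k+2), and C(m,r+2) (r+2)! = C(m,r) r! (m-r)(m-r-1) with (m-r)(m-r-1) >= 6
  while 2i+2 <= n-1, so a_(i+1) >= 2 a_i.  Beyond i = (n-1) div 2 + 1 the binomial
  coefficient, and with it a_i, vanishes.
*)

theory Submission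
  imports Defs "HOL-Computational_Algebra.Formal_Power_Series"
begin

unbundle fps_syntax

(* The Taylor coefficients of tan, read off from tan 0 = 0 and tan' = 1 + tan^2. *)
fun tan_coeff :: "nat \<Rightarrow> real" where
  "tan_coeff 0 = 0"
| "tan_coeff (Suc 0) = 1"
| "tan_coeff (Suc (Suc n)) = (\<Sum>k\<le>Suc n. tan_coeff k * tan_coeff (Suc n - k)) / (n + 2)"

declare tan_coeff.simps(3) [simp del]

lemma tan_coeff_Suc_Suc:
  "(real n + 2) * tan_coeff (Suc (Suc n)) = (\<Sum>k\<le>Suc n. tan_coeff k * tan_coeff (Suc n - k))"
  by (simp add: tan_coeff.simps(3) add.commute del: sum.atMost_Suc)

lemma tan_coeff_nonneg: "tan_coeff n \<ge> 0"
proof (induction n rule: less_induct)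
  case (less n)
  then show ?case
    by (cases n rule: tan_coeff.cases)
       (auto simp: tan_coeff.simps(3) simp del: sum.atMost_Suc intro!: divide_nonneg_pos sum_nonneg)
qed

lemma tan_coeff_even: "even n \<Longrightarrow> tan_coeff n = 0"
proof (induction n rule: less_induct)
  case (less n)
  show ?case
  proof (cases n rule: tan_coeff.cases)
    case (3 m)
    have "tan_coeff k * tan_coeff (Suc m - k) = 0" if "k \<le> Suc m" for k
      using less 3 that by (cases "even k") auto
    then have "(\<Sum>k\<le>Suc m. tan_coeff k * tan_coeff (Suc m - k)) = 0"
      by (intro sum.neutral) simp
    then show ?thesis
      using 3 by (simp add: tan_coeff.simps(3) del: sum.atMost_Suc)
  qed (use less in auto)
qed

lemma tan_coeff_odd_pos: "odd n \<Longrightarrow> tan_coeff n > 0"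
proof (induction n rule: less_induct)
  case (less n)
  show ?case
  proof (cases n rule: tan_coeff.cases)
    case (3 m)
    have "tan_coeff 1 * tan_coeff (Suc m - 1) \<le> (\<Sum>k\<le>Suc m. tan_coeff k * tan_coeff (Suc m - k))"
      by (rule member_le_sum) (auto intro: mult_nonneg_nonneg tan_coeff_nonneg)
    moreover have "tan_coeff m > 0"
      using less 3 by simp
    ultimately show ?thesis
      using 3 by (simp add: tan_coeff.simps(3) del: sum.atMost_Suc)
  qed (use less in auto)
qed

lemma tan_coeff_le_3_tan_coeff_add_2: "tan_coeff n \<le> 3 * tan_coeff (n + 2)"
proof (induction n rule: less_induct)
  case (less n)
  show ?case
  proof (cases n rule: tan_coeff.cases)
    case (3 p)
    define A B where "A = tan_coeff (p + 2)" and "B = tan_coeff (p + 4)"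
    have "(\<Sum>k\<le>Suc p. tan_coeff k * tan_coeff (Suc p - k))
        \<le> 3 * (\<Sum>k\<le>Suc p. tan_coeff k * tan_coeff (p + 3 - k))"
      unfolding sum_distrib_left
    proof (rule sum_mono)
      fix k assume "k \<in> {..Suc p}"
      then have "tan_coeff (Suc p - k) \<le> 3 * tan_coeff (p + 3 - k)"
        using less.IH[of "Suc p - k"] 3 by (simp add: Suc_diff_le numeral_eq_Suc)
      then show "tan_coeff k * tan_coeff (Suc p - k) \<le> 3 * (tan_coeff k * tan_coeff (p + 3 - k))"
        using mult_left_mono[OF _ tan_coeff_nonneg] by (metis mult.left_commute)
    qed
    then have "(real p + 2) * A \<le> 3 * (\<Sum>k\<le>Suc p. tan_coeff k * tan_coeff (p + 3 - k))"
      using tan_coeff_Suc_Suc[of p] by (simp add: A_def numeral_eq_Suc)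
    moreover have "(\<Sum>k\<le>Suc p. tan_coeff k * tan_coeff (p + 3 - k)) + A \<le> (real p + 4) * B"
      using tan_coeff_Suc_Suc[of "Suc (Suc p)"]
      by (simp add: A_def B_def numeral_eq_Suc tan_coeff_nonneg del: sum.atMost_Suc)
         (simp add: algebra_simps)
    ultimately have "(real p + 5) * A \<le> (real p + 5) * (3 * B)"
      using tan_coeff_nonneg[of "p + 4"] unfolding B_def by (simp add: algebra_simps)
    then show ?thesis
      using 3 by (simp add: A_def B_def numeral_eq_Suc)
  next
    case 2
    have "3 * tan_coeff 3 = 1"
      using tan_coeff_Suc_Suc[of 1] by (simp add: numeral_eq_Suc tan_coeff_even)
    then show ?thesis
      using 2 by (simp add: numeral_3_eq_3)
  qed (simp add: tan_coeff_nonneg)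
qed

lemma fps_eq_0_if_fps_deriv_eq_mult:
  fixes f g :: "'a::{idom, ring_char_0} fps"
  assumes "fps_deriv f = g * f" and "f $ 0 = 0"
  shows "f = 0"
proof -
  have "f $ n = 0" for n
  proof (induction n rule: less_induct)
    case (less n)
    show ?case
    proof (cases n)
      case (Suc m)
      have "of_nat (Suc m) * f $ Suc m = (g * f) $ m"
        using fps_deriv_nth[of f m] by (simp add: assms(1))
      also have "\<dots> = 0"
        using less Suc by (simp add: fps_mult_nth)
      finally show ?thesis
        using Suc by (simp del: of_nat_Suc)
    qed (use assms(2) in simp)
  qed
  then show ?thesis
    by (simp add: fps_ext)
qed

definition cosh_fps :: "real fps" where
  "cosh_fps = Abs_fps (\<lambda>n. if even n then 1 / fact n else 0)"

definition sinh_fps :: "real fps" where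
  "sinh_fps = Abs_fps (\<lambda>n. if odd n then 1 / fact n else 0)"

(* tanh x = - i tan (i x) *)
definition tanh_fps :: "real fps" where
  "tanh_fps = Abs_fps (\<lambda>n. (- 1) ^ (n div 2) * tan_coeff n)"

lemma fps_deriv_cosh_fps: "fps_deriv cosh_fps = sinh_fps"
  and fps_deriv_sinh_fps: "fps_deriv sinh_fps = cosh_fps"
  by (auto intro!: fps_ext simp: cosh_fps_def sinh_fps_def fact_Suc simp del: of_nat_Suc)

lemma fps_deriv_tanh_fps: "fps_deriv tanh_fps = 1 - tanh_fps * tanh_fps"
proof (rule fps_ext)
  fix n
  show "fps_deriv tanh_fps $ n = (1 - tanh_fps * tanh_fps) $ n"
  proof (cases n)
    case 0
    then show ?thesis
      by (simp add: tanh_fps_def fps_mult_nth)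
  next
    case (Suc m)
    have "tanh_fps $ k * tanh_fps $ (Suc m - k)
        = (- 1) ^ (m div 2) * (tan_coeff k * tan_coeff (Suc m - k))"
      if "k \<le> Suc m" for k
    proof (cases "odd k \<and> odd (Suc m - k)")
      case True
      then have "k div 2 + (Suc m - k) div 2 = m div 2"
        using that by presburger
      then show ?thesis
        by (simp add: tanh_fps_def flip: power_add)
    next
      case False
      then show ?thesis
        using that by (auto simp: tanh_fps_def tan_coeff_even)
    qed
    then have "(tanh_fps * tanh_fps) $ Suc m
        = (- 1) ^ (m div 2) * (\<Sum>k\<le>Suc m. tan_coeff k * tan_coeff (Suc m - k))"
      by (simp add: fps_mult_nth atLeast0AtMost sum_distrib_left del: sum.atMost_Suc)
    moreover have "fps_deriv tanh_fps $ Suc m = - ((- 1) ^ (m div 2) * ((real m + 2) * tan_coeff (Suc (Suc m))))"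
      by (simp add: tanh_fps_def algebra_simps)
    ultimately show ?thesis
      using Suc by (simp only: tan_coeff_Suc_Suc) simp
  qed
qed

lemma cosh_fps_mult_tanh_fps: "cosh_fps * tanh_fps = sinh_fps"
proof -
  have "fps_deriv (cosh_fps * tanh_fps - sinh_fps) = - tanh_fps * (cosh_fps * tanh_fps - sinh_fps)"
    by (simp add: fps_deriv_cosh_fps fps_deriv_sinh_fps fps_deriv_tanh_fps algebra_simps)
  moreover have "(cosh_fps * tanh_fps - sinh_fps) $ 0 = 0"
    by (simp add: cosh_fps_def sinh_fps_def tanh_fps_def)
  ultimately show ?thesis
    using fps_eq_0_if_fps_deriv_eq_mult by fastforce
qed

lemma sum_binomial_fact_tanh_fps:
  assumes "odd k"
  shows "(\<Sum>j\<le>k. real (k choose j) * (fact j * tanh_fps $ j)) = 1"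
proof -
  have term_eq: "real (k choose j) * (fact j * tanh_fps $ j) = fact k * (tanh_fps $ j * cosh_fps $ (k - j))"
    if "j \<le> k" for j
  proof (cases "even j")
    case True
    then show ?thesis
      by (simp add: tanh_fps_def tan_coeff_even)
  next
    case False
    then show ?thesis
      using assms that by (simp add: cosh_fps_def binomial_fact)
  qed
  have "(\<Sum>j\<le>k. real (k choose j) * (fact j * tanh_fps $ j)) = fact k * (tanh_fps * cosh_fps) $ k"
    unfolding fps_mult_nth atLeast0AtMost sum_distrib_left using term_eq by (intro sum.cong) auto
  also have "\<dots> = 1"
    using assms cosh_fps_mult_tanh_fps by (simp add: mult.commute sinh_fps_def)
  finally show ?thesis .
qed

lemma sa_empty: "sa E {} = 1"
  by (simp add: sa.simps)

lemma sa_singleton: "sa E {x} = 0"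
proof -
  have "connected_on E {x}"
    unfolding connected_on_def by auto
  then show ?thesis
    by (simp add: sa.simps[of E "{x}"])
qed

lemma sa_eq_0_if_edgeless:
  assumes "finite I" "I \<noteq> {}" "edges_on E I = {}"
  shows "sa E I = 0"
proof (cases "connected_on E I")
  case True
  then obtain x where "I = {x}"
    using assms(3) unfolding connected_on_def by auto
  then show ?thesis
    by (simp add: sa_singleton)
next
  case False
  have "components E I = (\<lambda>x. {x}) ` I"
    using assms(3) unfolding components_def by auto
  then have "(\<Prod>C\<in>components E I. sa E C) = 0"
    using assms(1,2) by (auto simp: sa_singleton intro: prod_zero)
  then show ?thesis
    using False assms(1,2) by (simp add: sa.simps[of E I])
qed

lemma edges_on_mono: "J \<subseteq> I \<Longrightarrow> edges_on E J \<subseteq> edges_on E I"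
  unfolding edges_on_def by auto

lemma sum_sa_Pow_if_edgeless:
  assumes "finite L" "edges_on E L = {}"
  shows "(\<Sum>J\<in>Pow L. sa E J) = 1"
proof -
  have "sa E J = 0" if "J \<in> Pow L - {{}}" for J
    using that assms edges_on_mono[of J L E] by (intro sa_eq_0_if_edgeless) (auto intro: finite_subset)
  then have "(\<Sum>J\<in>Pow L - {{}}. sa E J) = 0"
    by (rule sum.neutral[OF ballI])
  then show ?thesis
    using assms(1) by (simp add: sum.remove[of "Pow L" "{}"] sa_empty)
qed

lemma sum_sa_Pow_if_connected_even:
  assumes "finite I" "connected_on E I" "even (card I)"
  shows "(\<Sum>J\<in>Pow I. sa E J) = 0"
proof -
  have "Pow I = insert I {J. J \<subset> I}" and "I \<notin> {J. J \<subset> I}"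
    by auto
  moreover have "finite {J. J \<subset> I}"
    using assms(1) by (auto intro: finite_subset[of _ "Pow I"])
  moreover have "sa E I = - (\<Sum>J\<in>{J. J \<subset> I}. sa E J)"
    using assms by (simp add: sa.simps[of E I] connected_on_def)
  ultimately show ?thesis
    using assms(1) by simp
qed

lemma sum_Pow_insert:
  assumes "finite A" "a \<notin> A"
  shows "(\<Sum>J\<in>Pow (insert a A). g J) = (\<Sum>J\<in>Pow A. g J) + (\<Sum>J\<in>Pow A. g (insert a J))"
proof -
  have "inj_on (insert a) (Pow A)"
    using assms(2) by (auto simp: inj_on_def)
  then have "(\<Sum>J\<in>insert a ` Pow A. g J) = (\<Sum>J\<in>Pow A. g (insert a J))"
    by (simp add: sum.reindex)
  moreover have "Pow A \<inter> insert a ` Pow A = {}"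
    using assms(2) by auto
  ultimately show ?thesis
    using assms(1) by (simp add: Pow_insert sum.union_disjoint)
qed

lemma sum_Pow_card:
  assumes "finite L"
  shows "(\<Sum>J\<in>Pow L. h (card J)) = (\<Sum>j\<le>card L. of_nat (card L choose j) * h j)"
proof -
  have "(\<Sum>J\<in>Pow L. h (card J)) = (\<Sum>j\<le>card L. \<Sum>J\<in>{J. J \<in> Pow L \<and> card J = j}. h (card J))"
    using assms by (intro sum.group[symmetric]) (auto intro: card_mono)
  also have "\<dots> = (\<Sum>j\<le>card L. of_nat (card L choose j) * h j)"
    using n_subsets[OF assms] by (intro sum.cong) auto
  finally show ?thesis .
qed

lemma card_subsets_containing:
  assumes "finite A" "a \<in> A"
  shows "card {I. I \<subseteq> A \<and> card I = Suc k \<and> a \<in> I} = (card A - 1) choose k"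
proof -
  have "{I. I \<subseteq> A \<and> card I = Suc k \<and> a \<in> I} = insert a ` {J. J \<subseteq> A - {a} \<and> card J = k}"
  proof (intro equalityI subsetI)
    fix I assume "I \<in> {I. I \<subseteq> A \<and> card I = Suc k \<and> a \<in> I}"
    then have "I = insert a (I - {a})" "I - {a} \<subseteq> A - {a}" "card (I - {a}) = k"
      using assms(1) by (auto dest: finite_subset)
    then show "I \<in> insert a ` {J. J \<subseteq> A - {a} \<and> card J = k}"
      by blast
  next
    fix I assume "I \<in> insert a ` {J. J \<subseteq> A - {a} \<and> card J = k}"
    then obtain J where "I = insert a J" "J \<subseteq> A - {a}" "card J = k"
      by blast
    moreover have "finite J" "a \<notin> J"
      using \<open>J \<subseteq> A - {a}\<close> assms(1) by (auto intro: finite_subset)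
    ultimately show "I \<in> {I. I \<subseteq> A \<and> card I = Suc k \<and> a \<in> I}"
      using assms(2) by auto
  qed
  moreover have "inj_on (insert a) {J. J \<subseteq> A - {a} \<and> card J = k}"
    by (auto simp: inj_on_def)
  ultimately show ?thesis
    using assms by (simp add: card_image n_subsets)
qed

lemma edges_on_star_adj: "0 \<notin> I \<Longrightarrow> edges_on star_adj I = {}"
  unfolding edges_on_def star_adj_def by (auto intro!: gr0I)

lemma connected_on_star_adj:
  assumes "0 \<in> I"
  shows "connected_on star_adj I"
proof -
  have "(x, 0) \<in> edges_on star_adj I" "(0, x) \<in> edges_on star_adj I" if "x \<in> I" "x \<noteq> 0" for x
    using that assms unfolding edges_on_def star_adj_def by auto
  then have "(x, 0) \<in> (edges_on star_adj I)\<^sup>* \<and> (0, x) \<in> (edges_on star_adj I)\<^sup>*" if "x \<in> I" for x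
    using that by (cases "x = 0") auto
  then show ?thesis
    unfolding connected_on_def using assms by (blast intro: rtrancl_trans)
qed

lemma sa_star_adj_eq:
  fixes f :: "nat \<Rightarrow> 'a::comm_ring_1"
  assumes f_even: "\<And>k. even k \<Longrightarrow> f k = 0"
    and f_odd: "\<And>k. odd k \<Longrightarrow> (\<Sum>j\<le>k. of_nat (k choose j) * f j) = - 1"
    and "finite I" "0 \<in> I"
  shows "of_int (sa star_adj I) = f (card I - 1)"
  using assms(3,4)
proof (induction "card I" arbitrary: I rule: less_induct)
  case less
  define L where "L = I - {0}"
  have I: "I = insert 0 L" "0 \<notin> L" "finite L"
    using less.prems unfolding L_def by auto
  then have card_I: "card I - 1 = card L"
    by simp
  show ?case
  proof (cases "even (card I)")
    case False
    then have "sa star_adj I = 0"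
      using less.prems connected_on_star_adj[OF less.prems(2)] by (auto simp: sa.simps[of _ I])
    moreover have "even (card L)"
      using False I by simp
    ultimately show ?thesis
      using f_even card_I by simp
  next
    case True
    have "of_int (sa star_adj (insert 0 J)) = f (card J)" if "J \<subset> L" for J
    proof -
      have J: "finite J" "0 \<notin> J"
        using that I by (auto intro: finite_subset)
      have "card J < card L"
        using that I by (simp add: psubset_card_mono)
      then have "card (insert 0 J) < card I"
        using I J by simp
      then show ?thesis
        using less.hyps[of "insert 0 J"] J by simp
    qed
    then have "(\<Sum>J\<in>Pow L - {L}. of_int (sa star_adj (insert 0 J)) :: 'a)
        = (\<Sum>J\<in>Pow L - {L}. f (card J))"
      by (intro sum.cong) auto
    also have "\<dots> = (\<Sum>J\<in>Pow L. f (card J)) - f (card L)"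
      using I by (simp add: sum.remove[of "Pow L" L])
    also have "\<dots> = - 1 - f (card L)"
      using f_odd[of "card L"] True I by (simp add: sum_Pow_card)
    finally have sum_below: "(\<Sum>J\<in>Pow L - {L}. of_int (sa star_adj (insert 0 J)) :: 'a) = - 1 - f (card L)" .
    have "0 = (\<Sum>J\<in>Pow I. of_int (sa star_adj J) :: 'a)"
      using sum_sa_Pow_if_connected_even[OF less.prems(1) connected_on_star_adj[OF less.prems(2)] True]
      by (simp flip: of_int_sum)
    also have "\<dots> = (\<Sum>J\<in>Pow L. of_int (sa star_adj J)) + (\<Sum>J\<in>Pow L. of_int (sa star_adj (insert 0 J)))"
      using I by (simp add: sum_Pow_insert)
    also have "\<dots> = 1 + (of_int (sa star_adj I) + (- 1 - f (card L)))"
      using I sum_below sum_sa_Pow_if_edgeless[OF I(3) edges_on_star_adj[OF I(2)]]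
      by (simp add: sum.remove[of "Pow L" L] flip: of_int_sum)
    finally show ?thesis
      using card_I by (simp add: algebra_simps)
  qed
qed

lemma sa_star_adj_center:
  assumes "finite I" "0 \<in> I"
  shows "real_of_int (sa star_adj I) = - (fact (card I - 1) * tanh_fps $ (card I - 1))"
proof (rule sa_star_adj_eq[OF _ _ assms])
  show "- (fact k * tanh_fps $ k) = 0" if "even k" for k :: nat
    using that by (simp add: tanh_fps_def tan_coeff_even)
  show "(\<Sum>j\<le>k. of_nat (k choose j) * - (fact j * tanh_fps $ j)) = - 1" if "odd k" for k
    using sum_binomial_fact_tanh_fps[OF that] by (simp add: sum_negf)
qed

lemma a_num_star_adj_center:
  assumes "finite I" "0 \<in> I"
  shows "real (a_num star_adj I) = fact (card I - 1) * tan_coeff (card I - 1)"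
  using sa_star_adj_center[OF assms] tan_coeff_nonneg[of "card I - 1"]
  by (simp add: a_num_def tanh_fps_def abs_mult)

lemma a_seq_0: "finite V \<Longrightarrow> a_seq V E 0 = 1"
  by (simp add: a_seq_def a_num_def sa_empty card_eq_0_iff finite_subset cong: conj_cong)

lemma a_seq_star_adj:
  assumes "finite V" "0 \<in> V" "i \<ge> 1"
  shows "real (a_seq V star_adj i)
    = real ((card V - 1) choose (2 * i - 1)) * (fact (2 * i - 1) * tan_coeff (2 * i - 1))"
proof -
  define S where "S = {I. I \<subseteq> V \<and> card I = 2 * i}"
  have "real (a_num star_adj I) = (if 0 \<in> I then fact (2 * i - 1) * tan_coeff (2 * i - 1) else 0)"
    if "I \<in> S" for I
  proof -
    have "finite I" "card I = 2 * i" "I \<noteq> {}"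
      using that assms unfolding S_def by (auto intro: finite_subset)
    then show ?thesis
      using a_num_star_adj_center[of I] sa_eq_0_if_edgeless[OF _ _ edges_on_star_adj, of I]
      by (auto simp: a_num_def)
  qed
  then have "real (a_seq V star_adj i) = (\<Sum>I\<in>S. if 0 \<in> I then fact (2 * i - 1) * tan_coeff (2 * i - 1) else 0)"
    unfolding a_seq_def S_def by simp
  also have "\<dots> = card {I \<in> S. 0 \<in> I} * (fact (2 * i - 1) * tan_coeff (2 * i - 1))"
    using assms(1) by (simp add: sum.If_cases S_def Int_def)
  also have "card {I \<in> S. 0 \<in> I} = (card V - 1) choose (2 * i - 1)"
    using card_subsets_containing[OF assms(1,2), of "2 * i - 1"] assms(3)
    unfolding S_def by simp
  finally show ?thesis .
qed

lemma of_nat_binomial_mult_fact: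
  "of_nat (m choose k) * fact k = (\<Prod>i<k. of_nat m - of_nat i :: 'a::field_char_0)"
  by (simp add: binomial_gbinomial gbinomial_mult_fact' atLeast0LessThan)

lemma a_seq_star_adj_double_le_Suc:
  assumes "finite V" "0 \<in> V" "i \<ge> 1" "2 * Suc i \<le> card V - 1"
  shows "2 * a_seq V star_adj i \<le> a_seq V star_adj (Suc i)"
proof -
  define m r where "m = card V - 1" and "r = 2 * i - 1"
  define P where "P = (\<Prod>j<r. real m - real j)"
  have r: "2 * Suc i - 1 = r + 2" "r + 3 \<le> m"
    using assms(3,4) unfolding m_def r_def by auto
  have "P \<ge> 0"
    unfolding P_def using r by (intro prod_nonneg) auto
  have a_i: "real (a_seq V star_adj i) = P * tan_coeff r"
    using a_seq_star_adj[OF assms(1-3)] of_nat_binomial_mult_fact[of m r, where 'a = real]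
    unfolding m_def r_def P_def by (simp add: mult.assoc)
  have "real (a_seq V star_adj (Suc i)) = (\<Prod>j<r + 2. real m - real j) * tan_coeff (r + 2)"
    using a_seq_star_adj[OF assms(1,2), of "Suc i"] of_nat_binomial_mult_fact[of m "r + 2", where 'a = real]
    unfolding m_def r by (simp add: mult.assoc)
  also have "\<dots> = P * ((real m - real r) * (real m - real r - 1)) * tan_coeff (r + 2)"
    unfolding P_def by (simp add: numeral_eq_Suc algebra_simps)
  also have "\<dots> \<ge> P * 6 * tan_coeff (r + 2)"
  proof -
    have "(3::real) * 2 \<le> (real m - real r) * (real m - real r - 1)"
      using r by (intro mult_mono) auto
    then show ?thesis
      using \<open>P \<ge> 0\<close> tan_coeff_nonneg[of "r + 2"] by (intro mult_right_mono mult_left_mono) auto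
  qed
  finally have "real (a_seq V star_adj (Suc i)) \<ge> 2 * (P * (3 * tan_coeff (r + 2)))"
    by simp
  moreover have "P * tan_coeff r \<le> P * (3 * tan_coeff (r + 2))"
    using \<open>P \<ge> 0\<close> tan_coeff_le_3_tan_coeff_add_2 by (rule mult_left_mono[rotated])
  ultimately show ?thesis
    using a_i by linarith
qed

lemma a_seq_star_adj_less_Suc:
  assumes "finite V" "0 \<in> V" "Suc i \<le> (card V - 1) div 2"
  shows "a_seq V star_adj i < a_seq V star_adj (Suc i)"
proof (cases "i = 0")
  case True
  have "real (a_seq V star_adj 1) = real (card V - 1)"
    using a_seq_star_adj[OF assms(1,2), of 1] by simp
  then show ?thesis
    using True assms(3) a_seq_0[OF assms(1)] by simp
next
  case False
  have "real ((card V - 1) choose (2 * i - 1)) > 0" "tan_coeff (2 * i - 1) > 0"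
    using False assms(3) by (auto intro: tan_coeff_odd_pos)
  then have "real (a_seq V star_adj i) > 0"
    using False a_seq_star_adj[OF assms(1,2), of i] by simp
  then show ?thesis
    using False assms(3) a_seq_star_adj_double_le_Suc[OF assms(1,2), of i] by fastforce
qed

lemma a_seq_star_adj_eq_0:
  assumes "finite V" "0 \<in> V" "card V - 1 < 2 * i - 1"
  shows "a_seq V star_adj i = 0"
proof -
  have "i \<ge> 1"
    using assms(3) by simp
  then show ?thesis
    using a_seq_star_adj[OF assms(1,2) \<open>i \<ge> 1\<close>] assms(3) by (simp add: binomial_eq_0)
qed

lemma less_if_less_Suc_up_to:
  fixes f :: "nat \<Rightarrow> 'a::order"
  assumes "\<And>k. Suc k \<le> N \<Longrightarrow> f k < f (Suc k)" and "i < j" "j \<le> N"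
  shows "f i < f j"
  using Suc_leI[OF assms(2)] assms(3)
proof (induction j rule: dec_induct)
  case (step k)
  then show ?case
    using assms(1)[of k] by simp
qed (use assms(1) in simp)

lemma tail_peaked_if_mono_up_to:
  assumes "\<And>i j. i \<le> j \<Longrightarrow> j \<le> N \<Longrightarrow> f i \<le> f j" and "\<And>q. q > Suc N \<Longrightarrow> f q = 0"
  shows "tail_peaked f"
  unfolding tail_peaked_def
proof (intro conjI exI allI impI)
  show "f q = 0" if "q \<ge> N + 2" for q
    using that assms(2) by simp
  fix i j p q assume "i \<le> j \<and> j \<le> p \<and> p < q \<and> f p \<noteq> 0 \<and> f q \<noteq> 0"
  then show "f i \<le> f j"
    using assms by (metis Suc_le_eq le_trans not_le)
qed

theorem mainTheorem13:
  fixes n :: nat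
  assumes "n \<ge> 1"
  shows "(\<forall>i j. i < j \<and> j \<le> (n - 1) div 2 \<longrightarrow>
            a_seq (star_vertices n) star_adj i < a_seq (star_vertices n) star_adj j)
         \<and> tail_peaked (a_seq (star_vertices n) star_adj)"
proof -
  let ?a = "a_seq (star_vertices n) star_adj"
  have V: "finite (star_vertices n)" "0 \<in> star_vertices n" "card (star_vertices n) = n"
    using assms by (auto simp: star_vertices_def)
  have less: "?a i < ?a j" if "i < j" "j \<le> (n - 1) div 2" for i j
    using a_seq_star_adj_less_Suc[OF V(1,2)] V(3) by (intro less_if_less_Suc_up_to[OF _ that]) simp
  have "tail_peaked ?a"
  proof (rule tail_peaked_if_mono_up_to)
    show "?a i \<le> ?a j" if "i \<le> j" "j \<le> (n - 1) div 2" for i j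
      using that less[of i j] by (cases "i = j") auto
    show "?a q = 0" if "q > Suc ((n - 1) div 2)" for q
      using that a_seq_star_adj_eq_0[OF V(1,2)] V(3) by simp
  qed
  then show ?thesis
    using less by blast
qed

end
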